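(* Let $G$ be a connected simple graph with maximum degree at most $3$ and minimum degree at least $2$, in which no two adjacent vertices both have degree $3$. Let $M_1,M_2$ be disjoint matchings of $G$ such that $|M_1\cup M_2|$ is maximum over all pairs of disjoint matchings, and, subject to this, such that $G_{M_1,M_2}$ has the minimum number of connected components. Let $H$ be the graph with vertex set $E(G)\setminus(M_1\cup M_2)$ in which two distinct edges $e_1,e_2$ are adjacent if and only if their distance in $G$ is at most $2$. If $u_1u_2u_3$ and $v_1v_2v_3$ are two distinct components of $G_{M_1,M_2}$ that are paths $P_3$, then $u_1u_2,u_2u_3$ and $v_1v_2,v_2v_3$ do not lie in the same connected component of $H$.
   Context: $G_{M_1,M_2}$ denotes the subgraph of $G$ induced by the edge set $E(G)\setminus(M_1\cup M_2)$. $P_k$ denotes a path on $k$ vertices. The distance between two edges of $G$ is the distance between the corresponding vertices in the line graph of $G$. *)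

theory Defs
  imports Main
begin

definition simple_graph :: "'a set \<Rightarrow> 'a set set \<Rightarrow> bool" where
  "simple_graph V E \<longleftrightarrow> finite V \<and>
     (\<forall>e\<in>E. \<exists>u v. u \<noteq> v \<and> e = {u, v} \<and> u \<in> V \<and> v \<in> V)"

definition degree :: "'a set set \<Rightarrow> 'a \<Rightarrow> nat" where
  "degree E v = card {e \<in> E. v \<in> e}"

definition restr_adj :: "'b set \<Rightarrow> ('b \<Rightarrow> 'b \<Rightarrow> bool) \<Rightarrow> 'b \<Rightarrow> 'b \<Rightarrow> bool" where
  "restr_adj W adj x y \<longleftrightarrow> x \<in> W \<and> y \<in> W \<and> adj x y"

definition components :: "'b set \<Rightarrow> ('b \<Rightarrow> 'b \<Rightarrow> bool) \<Rightarrow> 'b set set" where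
  "components W adj = {{y \<in> W. (restr_adj W adj)\<^sup>*\<^sup>* x y} | x. x \<in> W}"

definition connected_graph :: "'a set \<Rightarrow> 'a set set \<Rightarrow> bool" where
  "connected_graph V E \<longleftrightarrow> V \<noteq> {} \<and>
     (\<forall>u\<in>V. \<forall>v\<in>V. (restr_adj V (\<lambda>x y. {x, y} \<in> E))\<^sup>*\<^sup>* u v)"

definition matching :: "'a set set \<Rightarrow> 'a set set \<Rightarrow> bool" where
  "matching E M \<longleftrightarrow> M \<subseteq> E \<and> (\<forall>e1\<in>M. \<forall>e2\<in>M. e1 \<noteq> e2 \<longrightarrow> e1 \<inter> e2 = {})"

definition edge_sub_components :: "'a set set \<Rightarrow> 'a set set" where
  "edge_sub_components F = components (\<Union>F) (\<lambda>x y. {x, y} \<in> F)"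

definition rest_edges :: "'a set set \<Rightarrow> 'a set set \<Rightarrow> 'a set set \<Rightarrow> 'a set set" where
  "rest_edges E M1 M2 = E - (M1 \<union> M2)"

definition edge_dist_le2 :: "'a set set \<Rightarrow> 'a set \<Rightarrow> 'a set \<Rightarrow> bool" where
  "edge_dist_le2 E e1 e2 \<longleftrightarrow> e1 = e2 \<or> e1 \<inter> e2 \<noteq> {} \<or>
     (\<exists>e3\<in>E. e1 \<inter> e3 \<noteq> {} \<and> e3 \<inter> e2 \<noteq> {})"

definition H_adj :: "'a set set \<Rightarrow> 'a set \<Rightarrow> 'a set \<Rightarrow> bool" where
  "H_adj E e1 e2 \<longleftrightarrow> e1 \<noteq> e2 \<and> edge_dist_le2 E e1 e2"

definition H_components :: "'a set set \<Rightarrow> 'a set set \<Rightarrow> 'a set set \<Rightarrow> 'a set set set" where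
  "H_components E M1 M2 = components (rest_edges E M1 M2) (H_adj E)"

definition P3_component :: "'a set set \<Rightarrow> 'a set set \<Rightarrow> 'a set set \<Rightarrow> 'a \<Rightarrow> 'a \<Rightarrow> 'a \<Rightarrow> bool" where
  "P3_component E M1 M2 u1 u2 u3 \<longleftrightarrow>
     distinct [u1, u2, u3] \<and>
     {u1, u2, u3} \<in> edge_sub_components (rest_edges E M1 M2) \<and>
     {e \<in> rest_edges E M1 M2. e \<subseteq> {u1, u2, u3}} = {{u1, u2}, {u2, u3}}"

definition optimal_pair :: "'a set set \<Rightarrow> 'a set set \<Rightarrow> 'a set set \<Rightarrow> bool" where
  "optimal_pair E M1 M2 \<longleftrightarrow>
     matching E M1 \<and> matching E M2 \<and> M1 \<inter> M2 = {} \<and>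
     (\<forall>N1 N2. matching E N1 \<and> matching E N2 \<and> N1 \<inter> N2 = {} \<longrightarrow>
        card (N1 \<union> N2) \<le> card (M1 \<union> M2)) \<and>
     (\<forall>N1 N2. matching E N1 \<and> matching E N2 \<and> N1 \<inter> N2 = {} \<and>
        card (N1 \<union> N2) = card (M1 \<union> M2) \<longrightarrow>
        card (edge_sub_components (rest_edges E M1 M2))
          \<le> card (edge_sub_components (rest_edges E N1 N2)))"

end

theory Submission
  imports Defs
begin

(* In a pair (M1, M2) of disjoint matchings with |M1 \<union> M2| maximum, every P3 component
   u1 u2 u3 of G_{M1,M2} has its centre u2 missed by both matchings. Otherwise u2 has degree 3,
   its neighbours have degree at most 2, and u1, u2, u3 are leaves of the graph M1 \<union> M2; swapping
   M1 and M2 on the alternating path through u2 would then let a path edge join a matching.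

   Suppose an H-walk leads from an edge of such a P3 P = u1 u2 u3 to an edge of another one, Q.
   Where it first leaves P it reaches an unmatched edge {a, x} through a matched edge {u1, a},
   say in M1. Replacing {u1, a} by {u1, u2} in M1 keeps the pair maximum, turns u1 a x into a P3
   of the same kind, leaves Q untouched and removes only {u1, u2} from the unmatched edges. The
   remaining walk starts on the new P3, or passes through {u1, u2} and is then a shorter walk
   from P, so induction on the length of the walk excludes it. *)

section \<open>Simple graphs and degrees\<close>

lemma simple_graph_finite_edges:
  assumes "simple_graph V E"
  shows "finite E"
proof (rule finite_subset)
  show "E \<subseteq> Pow V"
    using assms unfolding simple_graph_def by fastforce
  show "finite (Pow V)"
    using assms unfolding simple_graph_def by simp
qed

lemma simple_graph_edgeE:
  assumes "simple_graph V E" "e \<in> E" "w \<in> e"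
  obtains y where "y \<noteq> w" "e = {w, y}" "w \<in> V" "y \<in> V"
proof -
  obtain p q where pq: "p \<noteq> q" "e = {p, q}" "p \<in> V" "q \<in> V"
    using assms(1,2) unfolding simple_graph_def by blast
  show ?thesis
  proof (cases "w = p")
    case True
    then show ?thesis
      using that[of q] pq by simp
  next
    case False
    then have "w = q"
      using assms(3) pq(2) by simp
    then show ?thesis
      using that[of p] pq by (simp add: insert_commute)
  qed
qed

lemma simple_graph_doubleton_edgeD:
  assumes "simple_graph V E" "{p, q} \<in> E"
  shows "p \<noteq> q" "p \<in> V" "q \<in> V"
proof -
  obtain u v where "u \<noteq> v" "{p, q} = {u, v}" "u \<in> V" "v \<in> V"
    using assms unfolding simple_graph_def by blast
  then show "p \<noteq> q" "p \<in> V" "q \<in> V"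
    by (auto simp: doubleton_eq_iff)
qed

lemma card_le_degree:
  assumes "finite E" "F \<subseteq> E" "\<And>e. e \<in> F \<Longrightarrow> v \<in> e"
  shows "card F \<le> degree E v"
  unfolding degree_def using assms by (intro card_mono) auto

lemma incident_edge_mem_if_degree_le:
  assumes "finite E" "F \<subseteq> E" "\<And>e. e \<in> F \<Longrightarrow> v \<in> e" "degree E v \<le> card F"
    and "e \<in> E" "v \<in> e"
  shows "e \<in> F"
proof (rule ccontr)
  assume "e \<notin> F"
  moreover have "finite F"
    using assms(1,2) by (rule finite_subset[rotated])
  ultimately have "card (insert e F) = Suc (card F)"
    by simp
  moreover have "card (insert e F) \<le> degree E v"
    using assms(2,3,5,6) by (intro card_le_degree[OF assms(1)]) blast+
  ultimately show False
    using assms(4) by simp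
qed

lemma incident_edges_outside_eq_if_degree_le:
  assumes "finite E" "F \<subseteq> E" "\<And>e. e \<in> F \<Longrightarrow> v \<in> e" "degree E v \<le> Suc (card F)"
    and "e \<in> E - F" "e' \<in> E - F" "v \<in> e" "v \<in> e'"
  shows "e = e'"
proof -
  have "finite F"
    using assms(1,2) by (rule finite_subset[rotated])
  then have "degree E v \<le> card (insert e F)"
    using assms(4,5) by simp
  moreover have "insert e F \<subseteq> E"
    using assms(2,5) by simp
  moreover have "\<And>x. x \<in> insert e F \<Longrightarrow> v \<in> x"
    using assms(3,7) by blast
  ultimately have "e' \<in> insert e F"
    using incident_edge_mem_if_degree_le[OF assms(1)] assms(6,8) by blast
  then show ?thesis
    using assms(6) by simp
qed

section \<open>Pairs of disjoint matchings of maximum size\<close>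

definition covered :: "'a set set \<Rightarrow> 'a \<Rightarrow> bool" where
  "covered M v \<longleftrightarrow> (\<exists>e\<in>M. v \<in> e)"

lemma covered_Un [simp]: "covered (A \<union> B) v \<longleftrightarrow> covered A v \<or> covered B v"
  unfolding covered_def by blast

lemma matching_unique_edge:
  "matching E M \<Longrightarrow> e \<in> M \<Longrightarrow> e' \<in> M \<Longrightarrow> v \<in> e \<Longrightarrow> v \<in> e' \<Longrightarrow> e = e'"
  unfolding matching_def by blast

lemma matching_insert:
  "matching E M \<Longrightarrow> {p, q} \<in> E \<Longrightarrow> \<not> covered M p \<Longrightarrow> \<not> covered M q
    \<Longrightarrow> matching E (insert {p, q} M)"
  unfolding matching_def covered_def by blast

lemma matching_Un_degree_le_2:
  assumes "matching E M1" "matching E M2"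
    and "e1 \<in> M1 \<union> M2" "e2 \<in> M1 \<union> M2" "e3 \<in> M1 \<union> M2" "v \<in> e1" "v \<in> e2" "v \<in> e3"
  shows "e1 = e2 \<or> e1 = e3 \<or> e2 = e3"
  using assms(3-) matching_unique_edge[OF assms(1), of _ _ v] matching_unique_edge[OF assms(2), of _ _ v]
  by blast

lemma rest_edges_commute: "rest_edges E M1 M2 = rest_edges E M2 M1"
  unfolding rest_edges_def by blast

definition max_disjoint_matchings :: "'a set set \<Rightarrow> 'a set set \<Rightarrow> 'a set set \<Rightarrow> bool" where
  "max_disjoint_matchings E M1 M2 \<longleftrightarrow> matching E M1 \<and> matching E M2 \<and> M1 \<inter> M2 = {} \<and>
     (\<forall>N1 N2. matching E N1 \<and> matching E N2 \<and> N1 \<inter> N2 = {} \<longrightarrow>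
        card (N1 \<union> N2) \<le> card (M1 \<union> M2))"

lemma max_disjoint_matchings_commute:
  "max_disjoint_matchings E M1 M2 \<Longrightarrow> max_disjoint_matchings E M2 M1"
  unfolding max_disjoint_matchings_def by (simp add: Un_commute Int_commute)

lemma max_disjoint_matchingsD:
  assumes "max_disjoint_matchings E M1 M2"
  shows "matching E M1" "matching E M2" "M1 \<inter> M2 = {}"
    and "\<And>N1 N2. matching E N1 \<Longrightarrow> matching E N2 \<Longrightarrow> N1 \<inter> N2 = {}
      \<Longrightarrow> card (N1 \<union> N2) \<le> card (M1 \<union> M2)"
  using assms unfolding max_disjoint_matchings_def by simp_all

lemma max_disjoint_matchings_subset:
  assumes "max_disjoint_matchings E M1 M2"
  shows "M1 \<union> M2 \<subseteq> E"
  using max_disjoint_matchingsD(1,2)[OF assms] unfolding matching_def by simp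

lemma max_disjoint_matchingsI_card:
  assumes "max_disjoint_matchings E M1 M2" "matching E N1" "matching E N2" "N1 \<inter> N2 = {}"
    and "card (M1 \<union> M2) \<le> card (N1 \<union> N2)"
  shows "max_disjoint_matchings E N1 N2"
proof -
  have "card (N1' \<union> N2') \<le> card (N1 \<union> N2)"
    if "matching E N1'" "matching E N2'" "N1' \<inter> N2' = {}" for N1' N2'
    using max_disjoint_matchingsD(4)[OF assms(1) that] assms(5) by linarith
  then show ?thesis
    using assms(2-4) unfolding max_disjoint_matchings_def by blast
qed

lemma max_disjoint_matchings_edge_covered:
  assumes "finite E" "max_disjoint_matchings E M1 M2" "{p, q} \<in> rest_edges E M1 M2"
  shows "covered M1 p \<or> covered M1 q"
proof (rule ccontr)
  assume uncovered: "\<not> ?thesis"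
  have pq: "{p, q} \<in> E" "{p, q} \<notin> M1 \<union> M2"
    using assms(3) unfolding rest_edges_def by blast+
  have "matching E (insert {p, q} M1)"
    using matching_insert[OF max_disjoint_matchingsD(1)[OF assms(2)] pq(1)] uncovered by blast
  moreover have "insert {p, q} M1 \<inter> M2 = {}"
    using pq(2) max_disjoint_matchingsD(3)[OF assms(2)] by blast
  ultimately have "card (insert {p, q} M1 \<union> M2) \<le> card (M1 \<union> M2)"
    by (rule max_disjoint_matchingsD(4)[OF assms(2) _ max_disjoint_matchingsD(2)[OF assms(2)]])
  moreover have "finite (M1 \<union> M2)"
    using assms(1) max_disjoint_matchings_subset[OF assms(2)] finite_subset by blast
  ultimately show False
    using pq(2) by simp
qed

lemma max_disjoint_matchings_exchange:
  assumes "finite E" "max_disjoint_matchings E M1 M2" "{u, a} \<in> M1"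
    and "{u, w} \<in> rest_edges E M1 M2" "\<not> covered M1 w"
  shows "max_disjoint_matchings E (insert {u, w} (M1 - {{u, a}})) M2"
proof (rule max_disjoint_matchingsI_card[OF assms(2)])
  note M1 = max_disjoint_matchingsD(1)[OF assms(2)]
  note disj = max_disjoint_matchingsD(3)[OF assms(2)]
  have uw: "{u, w} \<in> E" "{u, w} \<notin> M1 \<union> M2"
    using assms(4) unfolding rest_edges_def by simp_all
  have "matching E (M1 - {{u, a}})"
    using M1 unfolding matching_def by blast
  moreover have "\<not> covered (M1 - {{u, a}}) u"
    using matching_unique_edge[OF M1 _ assms(3)] unfolding covered_def by blast
  moreover have "\<not> covered (M1 - {{u, a}}) w"
    using assms(5) unfolding covered_def by blast
  ultimately show "matching E (insert {u, w} (M1 - {{u, a}}))"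
    using matching_insert[of E "M1 - {{u, a}}" u w] uw(1) by blast
  show "matching E M2"
    using assms(2) by (rule max_disjoint_matchingsD)
  show "insert {u, w} (M1 - {{u, a}}) \<inter> M2 = {}"
    using disj uw(2) by blast
  have "insert {u, w} (M1 - {{u, a}}) \<union> M2 = insert {u, w} (M1 \<union> M2 - {{u, a}})"
    using disj assms(3) by blast
  moreover have "finite (M1 \<union> M2)"
    using assms(1) max_disjoint_matchings_subset[OF assms(2)] by (rule finite_subset[rotated])
  moreover have "{u, w} \<notin> M1 \<union> M2 - {{u, a}}"
    using uw(2) by blast
  ultimately show "card (M1 \<union> M2) \<le> card (insert {u, w} (M1 - {{u, a}}) \<union> M2)"
    using assms(3) card_Suc_Diff1[of "M1 \<union> M2" "{u, a}"] by simp
qed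

lemma rest_edges_exchange:
  assumes "max_disjoint_matchings E M1 M2" "{u, a} \<in> M1" "{u, w} \<in> rest_edges E M1 M2"
  shows "rest_edges E (insert {u, w} (M1 - {{u, a}})) M2
    = insert {u, a} (rest_edges E M1 M2 - {{u, w}})"
proof -
  have "{u, a} \<in> E" "{u, a} \<notin> M2"
    using assms(2) max_disjoint_matchings_subset[OF assms(1)] max_disjoint_matchingsD(3)[OF assms(1)]
    by blast+
  moreover have "{u, w} \<noteq> {u, a}"
    using assms(2,3) unfolding rest_edges_def by auto
  ultimately show ?thesis
    unfolding rest_edges_def by blast
qed

definition swap_on :: "'a set \<Rightarrow> 'a set set \<Rightarrow> 'a set set \<Rightarrow> 'a set set" where
  "swap_on D A B = {e \<in> A. \<not> e \<subseteq> D} \<union> {e \<in> B. e \<subseteq> D}"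

lemma matching_swap_on:
  assumes "matching E M1" "matching E M2"
    and closed: "\<And>e. e \<in> M1 \<union> M2 \<Longrightarrow> e \<inter> D \<noteq> {} \<Longrightarrow> e \<subseteq> D"
  shows "matching E (swap_on D M1 M2)"
  unfolding matching_def
proof (intro conjI ballI impI)
  show "swap_on D M1 M2 \<subseteq> E"
    using assms(1,2) unfolding matching_def swap_on_def by blast
  fix e1 e2
  assume e: "e1 \<in> swap_on D M1 M2" "e2 \<in> swap_on D M1 M2" "e1 \<noteq> e2"
  show "e1 \<inter> e2 = {}"
  proof (rule ccontr)
    assume "e1 \<inter> e2 \<noteq> {}"
    then obtain v where v: "v \<in> e1" "v \<in> e2"
      by blast
    have in_M: "e1 \<in> M1 \<union> M2" "e2 \<in> M1 \<union> M2"
      using e(1,2) unfolding swap_on_def by blast+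
    have "e1 \<subseteq> D \<longleftrightarrow> e2 \<subseteq> D"
      using closed[OF in_M(1)] closed[OF in_M(2)] v by blast
    then have "(e1 \<in> M1 \<and> e2 \<in> M1) \<or> (e1 \<in> M2 \<and> e2 \<in> M2)"
      using e(1,2) unfolding swap_on_def by (cases "e1 \<subseteq> D") simp_all
    then show False
      using matching_unique_edge[OF assms(1) _ _ v] matching_unique_edge[OF assms(2) _ _ v] e(3)
      by blast
  qed
qed

lemma covered_swap_on:
  assumes closed: "\<And>e. e \<in> M1 \<union> M2 \<Longrightarrow> e \<inter> D \<noteq> {} \<Longrightarrow> e \<subseteq> D"
  shows "covered (swap_on D M1 M2) v \<longleftrightarrow> (if v \<in> D then covered M2 v else covered M1 v)"
proof -
  have "e \<subseteq> D" if "e \<in> M1 \<union> M2" "v \<in> e" "v \<in> D" for e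
    using closed[OF that(1)] that(2,3) by blast
  then show ?thesis
    unfolding swap_on_def covered_def by auto
qed

lemma max_disjoint_matchings_swap_on:
  assumes "max_disjoint_matchings E M1 M2"
    and closed: "\<And>e. e \<in> M1 \<union> M2 \<Longrightarrow> e \<inter> D \<noteq> {} \<Longrightarrow> e \<subseteq> D"
  shows "max_disjoint_matchings E (swap_on D M1 M2) (swap_on D M2 M1)"
proof (rule max_disjoint_matchingsI_card[OF assms(1)])
  note M = max_disjoint_matchingsD(1,2)[OF assms(1)]
  show "matching E (swap_on D M1 M2)"
    using M closed by (rule matching_swap_on)
  show "matching E (swap_on D M2 M1)"
    using M(2,1) closed by (rule matching_swap_on) blast
  show "swap_on D M1 M2 \<inter> swap_on D M2 M1 = {}"
    using max_disjoint_matchingsD(3)[OF assms(1)] unfolding swap_on_def by blast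
  have "swap_on D M1 M2 \<union> swap_on D M2 M1 = M1 \<union> M2"
    unfolding swap_on_def by blast
  then show "card (M1 \<union> M2) \<le> card (swap_on D M1 M2 \<union> swap_on D M2 M1)"
    by simp
qed

section \<open>Paths, components and walks\<close>

lemma rtranclp_distinct_path:
  assumes "r\<^sup>*\<^sup>* x y"
  obtains xs where "xs \<noteq> []" "hd xs = x" "last xs = y" "distinct xs" "successively r xs"
proof -
  have "\<exists>xs. xs \<noteq> [] \<and> hd xs = x \<and> last xs = y \<and> distinct xs \<and> successively r xs"
    using assms
  proof (induction rule: rtranclp_induct)
    case base
    show ?case
      by (intro exI[of _ "[x]"]) simp
  next
    case (step b c)
    then obtain xs where xs: "xs \<noteq> []" "hd xs = x" "last xs = b" "distinct xs" "successively r xs"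
      by blast
    show ?case
    proof (cases "c \<in> set xs")
      case True
      then obtain ys zs where split: "xs = ys @ c # zs"
        by (meson split_list)
      have "successively r (ys @ [c])"
        using xs(5) unfolding split by (auto simp: successively_append_iff)
      moreover have "hd (ys @ [c]) = x"
        using xs(2) split by (cases ys) auto
      moreover have "distinct (ys @ [c])"
        using xs(4) split by simp
      ultimately show ?thesis
        by (intro exI[of _ "ys @ [c]"]) simp
    next
      case False
      have "successively r (xs @ [c])"
        using xs step(2) by (auto simp: successively_append_iff)
      then show ?thesis
        using xs False by (intro exI[of _ "xs @ [c]"]) simp
    qed
  qed
  then show ?thesis
    using that by blast
qed

lemma successive_edges_neq:
  assumes "distinct xs" "Suc (Suc j) < length xs"
  shows "{xs ! j, xs ! Suc j} \<noteq> {xs ! Suc j, xs ! Suc (Suc j)}"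
proof
  assume eq: "{xs ! j, xs ! Suc j} = {xs ! Suc j, xs ! Suc (Suc j)}"
  have "xs ! j \<in> {xs ! Suc j, xs ! Suc (Suc j)}"
    by (simp only: eq[symmetric]) simp
  then show False
    using assms by (auto simp: nth_eq_iff_index_eq)
qed

lemma path_closed_if_max_degree_2:
  fixes S :: "'a set set"
  assumes degree_2: "\<And>v e1 e2 e3. e1 \<in> S \<Longrightarrow> e2 \<in> S \<Longrightarrow> e3 \<in> S \<Longrightarrow> v \<in> e1 \<Longrightarrow> v \<in> e2 \<Longrightarrow> v \<in> e3
      \<Longrightarrow> e1 = e2 \<or> e1 = e3 \<or> e2 = e3"
    and leaf: "\<And>w e e'. w \<in> {xs ! 0, xs ! (length xs - 1)} \<Longrightarrow> e \<in> S \<Longrightarrow> e' \<in> S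
      \<Longrightarrow> w \<in> e \<Longrightarrow> w \<in> e' \<Longrightarrow> e = e'"
    and path: "distinct xs" "successively (\<lambda>p q. {p, q} \<in> S) xs" "1 < length xs"
    and v: "v \<in> set xs" and e: "{v, w} \<in> S"
  shows "w \<in> set xs"
proof -
  define n where "n = length xs"
  obtain i where i: "i < n" "xs ! i = v"
    using v by (auto simp: n_def in_set_conv_nth)
  have path_edge: "{xs ! k, xs ! Suc k} \<in> S" if "Suc k < n" for k
    using successively_nth[OF path(2)] that by (simp add: n_def)
  obtain j where j: "Suc j < n" "{v, w} = {xs ! j, xs ! Suc j}"
  proof (cases i)
    case 0
    then have "{v, w} = {xs ! 0, xs ! Suc 0}"
      using leaf[of v "{v, w}" "{xs ! 0, xs ! Suc 0}"] e path_edge[of 0] path(3) i(2)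
      by (simp add: n_def)
    then show ?thesis
      using that[of 0] path(3) by (simp add: n_def)
  next
    case (Suc j)
    show ?thesis
    proof (cases "Suc i < n")
      case True
      have "{v, w} = {xs ! j, xs ! i} \<or> {v, w} = {xs ! i, xs ! Suc i}"
        using degree_2[OF e path_edge[of j] path_edge[of i]] successive_edges_neq[OF path(1), of j]
          True Suc i(2) by (auto simp: n_def)
      then show ?thesis
        using that[of j] that[of i] True Suc i(2) by auto
    next
      case False
      then have "i = n - 1"
        using i(1) by (simp add: n_def)
      then have "{v, w} = {xs ! j, xs ! Suc j}"
        using leaf[of v "{v, w}" "{xs ! j, xs ! Suc j}"] e path_edge[of j] Suc i
        by (simp add: n_def)
      then show ?thesis
        using that[of j] Suc i(1) by simp
    qed
  qed
  have "w \<in> {xs ! j, xs ! Suc j}"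
    by (simp only: j(2)[symmetric]) simp
  then show ?thesis
    using j(1) by (auto simp: n_def)
qed

lemma no_three_leaves_if_max_degree_2:
  fixes S :: "'a set set"
  assumes degree_2: "\<And>v e1 e2 e3. e1 \<in> S \<Longrightarrow> e2 \<in> S \<Longrightarrow> e3 \<in> S \<Longrightarrow> v \<in> e1 \<Longrightarrow> v \<in> e2 \<Longrightarrow> v \<in> e3
      \<Longrightarrow> e1 = e2 \<or> e1 = e3 \<or> e2 = e3"
    and leaf: "\<And>w e e'. w \<in> {x, y, z} \<Longrightarrow> e \<in> S \<Longrightarrow> e' \<in> S \<Longrightarrow> w \<in> e \<Longrightarrow> w \<in> e' \<Longrightarrow> e = e'"
    and distinct: "distinct [x, y, z]"
    and reach: "(\<lambda>p q. {p, q} \<in> S)\<^sup>*\<^sup>* x y" "(\<lambda>p q. {p, q} \<in> S)\<^sup>*\<^sup>* x z"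
  shows False
proof -
  obtain xs where xs: "xs \<noteq> []" "hd xs = x" "last xs = y" "distinct xs"
      "successively (\<lambda>p q. {p, q} \<in> S) xs"
    using rtranclp_distinct_path[OF reach(1)] by blast
  define n where "n = length xs"
  have first: "xs ! 0 = x" and last: "xs ! (n - 1) = y"
    using xs(1-3) by (simp_all add: n_def hd_conv_nth last_conv_nth)
  have "n \<noteq> 0" "n \<noteq> 1"
    using xs(1) first last distinct by (auto simp: n_def)
  then have two: "1 < n"
    by linarith
  have leaf_ends: "e = e'"
    if "w \<in> {xs ! 0, xs ! (length xs - 1)}" "e \<in> S" "e' \<in> S" "w \<in> e" "w \<in> e'" for w e e'
    using leaf[of w e e'] that first last unfolding n_def by auto
  have "z \<in> set xs"
    using reach(2)
  proof (induction rule: rtranclp_induct)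
    case base
    show ?case
      using first xs(1) by (metis length_greater_0_conv nth_mem)
  next
    case (step b c)
    show ?case
      by (rule path_closed_if_max_degree_2[of S xs b c])
        (fact degree_2 leaf_ends xs(4) xs(5) step(2,3) two[unfolded n_def])+
  qed
  then obtain i where i: "i < n" "xs ! i = z"
    by (auto simp: n_def in_set_conv_nth)
  have "i \<noteq> 0" "i \<noteq> n - 1"
    using i(2) first last distinct by (cases "i = 0"; cases "i = n - 1"; simp)+
  then obtain j where j: "i = Suc j" "Suc i < n"
    using i(1) not0_implies_Suc by (metis Suc_lessI diff_Suc_1)
  have "{xs ! j, xs ! Suc j} \<in> S" "{xs ! i, xs ! Suc i} \<in> S"
    using successively_nth[OF xs(5)] j by (simp_all add: n_def)
  then have "{xs ! j, xs ! i} = {xs ! i, xs ! Suc i}"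
    using leaf[of z] i(2) j(1) by simp
  then show False
    using successive_edges_neq[OF xs(4), of j] j by (simp add: n_def)
qed

lemma rtranclp_doubleton_closed:
  assumes "{p, q} \<in> S" "(\<lambda>a b. {a, b} \<in> S)\<^sup>*\<^sup>* x p"
  shows "(\<lambda>a b. {a, b} \<in> S)\<^sup>*\<^sup>* x q"
  using assms by (simp add: rtranclp.rtrancl_into_rtrancl)

lemma components_member_closed:
  assumes "C \<in> components W adj" "w \<in> C" "(restr_adj W adj)\<^sup>*\<^sup>* w y"
  shows "y \<in> C"
proof -
  obtain x where C: "C = {y \<in> W. (restr_adj W adj)\<^sup>*\<^sup>* x y}"
    using assms(1) unfolding components_def by blast
  have "y \<in> W"
    using assms(3) C assms(2) by (induction rule: rtranclp_induct) (auto simp: restr_adj_def)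
  then show ?thesis
    using assms(2,3) C by (auto intro: rtranclp_trans)
qed

lemma components_member_connected:
  assumes "symp adj" "C \<in> components W adj" "a \<in> C" "b \<in> C"
  shows "(restr_adj W adj)\<^sup>*\<^sup>* a b"
proof -
  obtain x where C: "C = {y \<in> W. (restr_adj W adj)\<^sup>*\<^sup>* x y}"
    using assms(2) unfolding components_def by blast
  have "symp (restr_adj W adj)"
    using assms(1) unfolding symp_def restr_adj_def by blast
  then have "(restr_adj W adj)\<^sup>*\<^sup>* a x"
    using assms(3) C by (auto intro: symp_rtranclp[THEN sympD])
  moreover have "(restr_adj W adj)\<^sup>*\<^sup>* x b"
    using assms(4) C by simp
  ultimately show ?thesis
    by (rule rtranclp_trans)
qed

lemma components_eq_if_common_member:
  assumes "symp adj" "C1 \<in> components W adj" "C2 \<in> components W adj" "z \<in> C1" "z \<in> C2"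
  shows "C1 = C2"
proof -
  have "C \<subseteq> C'" if "C \<in> components W adj" "C' \<in> components W adj" "z \<in> C" "z \<in> C'"
    for C C'
    using components_member_closed[OF that(2,4)] components_member_connected[OF assms(1) that(1,3)]
    by blast
  then show ?thesis
    using assms(2-5) by blast
qed

lemma relpowp_restr_adj_avoid:
  assumes "(restr_adj W adj ^^ n) x y" "x \<noteq> z"
  shows "(restr_adj (W - {z}) adj ^^ n) x y \<or> (\<exists>m<n. (restr_adj W adj ^^ m) z y)"
  using assms
proof (induction n arbitrary: x)
  case 0
  then show ?case
    by simp
next
  case (Suc n)
  obtain x' where x': "restr_adj W adj x x'" "(restr_adj W adj ^^ n) x' y"
    using relpowp_Suc_D2[OF Suc.prems(1)] by blast
  show ?case
  proof (cases "x' = z")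
    case True
    then show ?thesis
      using x'(2) by blast
  next
    case False
    have step: "restr_adj (W - {z}) adj x x'"
      using x'(1) False Suc.prems(2) unfolding restr_adj_def by blast
    from Suc.IH[OF x'(2) False] show ?thesis
    proof
      assume "(restr_adj (W - {z}) adj ^^ n) x' y"
      then have "(restr_adj (W - {z}) adj ^^ Suc n) x y"
        using step by (rule relpowp_Suc_I2[rotated])
      then show ?thesis
        by blast
    qed (use less_SucI in blast)
  qed
qed

lemma relpowp_restr_adj_mono:
  assumes "W \<subseteq> W'" "(restr_adj W adj ^^ n) x y"
  shows "(restr_adj W' adj ^^ n) x y"
  by (rule relpowp_mono[OF _ assms(2)]) (use assms(1) in \<open>auto simp: restr_adj_def\<close>)

section \<open>P3 components with an unmatched centre\<close>

text \<open>Unlike P3_component, this makes no reference to the components of G_{M1,M2}, so it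
  survives the exchanges below, which keep the size of M1 \<union> M2 but may change the components.\<close>

definition free_centre_P3 :: "'a set set \<Rightarrow> 'a set set \<Rightarrow> 'a set set \<Rightarrow> 'a \<Rightarrow> 'a \<Rightarrow> 'a \<Rightarrow> bool" where
  "free_centre_P3 E M1 M2 u1 u2 u3 \<longleftrightarrow> distinct [u1, u2, u3] \<and>
     {u1, u2} \<in> rest_edges E M1 M2 \<and> {u2, u3} \<in> rest_edges E M1 M2 \<and>
     \<not> covered (M1 \<union> M2) u2 \<and>
     (\<forall>e\<in>rest_edges E M1 M2. e \<inter> {u1, u2, u3} \<noteq> {} \<longrightarrow> e = {u1, u2} \<or> e = {u2, u3})"

lemma free_centre_P3D:
  assumes "free_centre_P3 E M1 M2 u1 u2 u3"
  shows "distinct [u1, u2, u3]" "{u1, u2} \<in> rest_edges E M1 M2" "{u2, u3} \<in> rest_edges E M1 M2"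
    and "\<not> covered M1 u2" "\<not> covered M2 u2"
    and "\<And>e. e \<in> rest_edges E M1 M2 \<Longrightarrow> e \<inter> {u1, u2, u3} \<noteq> {} \<Longrightarrow> e = {u1, u2} \<or> e = {u2, u3}"
  using assms unfolding free_centre_P3_def by (simp_all only: covered_Un) blast+

lemma free_centre_P3_rev:
  "free_centre_P3 E M1 M2 u1 u2 u3 \<Longrightarrow> free_centre_P3 E M1 M2 u3 u2 u1"
  unfolding free_centre_P3_def by (auto simp: insert_commute)

lemma free_centre_P3_commute:
  "free_centre_P3 E M1 M2 u1 u2 u3 \<Longrightarrow> free_centre_P3 E M2 M1 u1 u2 u3"
  unfolding free_centre_P3_def by (auto simp: rest_edges_commute[of E M1 M2])

lemma free_centre_P3_end_covered:
  assumes "finite E" "max_disjoint_matchings E M1 M2" "free_centre_P3 E M1 M2 u1 u2 u3"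
  shows "covered M1 u1"
  using max_disjoint_matchings_edge_covered[OF assms(1,2) free_centre_P3D(2)[OF assms(3)]]
    free_centre_P3D(4)[OF assms(3)] by simp

lemma free_centre_P3_cong:
  assumes "free_centre_P3 E M1 M2 v1 v2 v3"
    and same: "\<And>e. e \<inter> {v1, v2, v3} \<noteq> {} \<Longrightarrow> e \<in> N1 \<union> N2 \<longleftrightarrow> e \<in> M1 \<union> M2"
  shows "free_centre_P3 E N1 N2 v1 v2 v3"
proof -
  have rest: "e \<in> rest_edges E N1 N2 \<longleftrightarrow> e \<in> rest_edges E M1 M2"
    if "e \<inter> {v1, v2, v3} \<noteq> {}" for e
    using same[OF that] unfolding rest_edges_def by blast
  have "e \<notin> N1 \<union> N2" if "v2 \<in> e" for e
    using same[of e] that free_centre_P3D(4,5)[OF assms(1)] unfolding covered_def by blast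
  then have "\<not> covered (N1 \<union> N2) v2"
    unfolding covered_def by blast
  moreover have "{v1, v2} \<in> rest_edges E N1 N2" "{v2, v3} \<in> rest_edges E N1 N2"
    using rest free_centre_P3D(2,3)[OF assms(1)] by simp_all
  moreover have "e = {v1, v2} \<or> e = {v2, v3}"
    if "e \<in> rest_edges E N1 N2" "e \<inter> {v1, v2, v3} \<noteq> {}" for e
    using rest[OF that(2)] that free_centre_P3D(6)[OF assms(1)] by blast
  ultimately show ?thesis
    using free_centre_P3D(1)[OF assms(1)] unfolding free_centre_P3_def by blast
qed

lemma P3_component_closed:
  assumes "simple_graph V E" "P3_component E M1 M2 u1 u2 u3"
    and "e \<in> rest_edges E M1 M2" "e \<inter> {u1, u2, u3} \<noteq> {}"
  shows "e = {u1, u2} \<or> e = {u2, u3}"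
proof -
  let ?R = "rest_edges E M1 M2"
  obtain w where w: "w \<in> e" "w \<in> {u1, u2, u3}"
    using assms(4) by blast
  obtain y where y: "e = {w, y}"
    using simple_graph_edgeE[OF assms(1) _ w(1)] assms(3) unfolding rest_edges_def by blast
  have "restr_adj (\<Union>?R) (\<lambda>x y. {x, y} \<in> ?R) w y"
    unfolding restr_adj_def using assms(3) y by blast
  then have "y \<in> {u1, u2, u3}"
    using components_member_closed[OF _ w(2)] assms(2)
    unfolding P3_component_def edge_sub_components_def by blast
  then have "e \<in> {e \<in> ?R. e \<subseteq> {u1, u2, u3}}"
    using assms(3) w(2) y by blast
  then show ?thesis
    using assms(2) unfolding P3_component_def by blast
qed

lemma P3_components_disjoint:
  assumes "P3_component E M1 M2 u1 u2 u3" "P3_component E M1 M2 v1 v2 v3"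
    and "{u1, u2, u3} \<noteq> {v1, v2, v3}"
  shows "{u1, u2, u3} \<inter> {v1, v2, v3} = {}"
proof (rule ccontr)
  let ?R = "rest_edges E M1 M2"
  assume "{u1, u2, u3} \<inter> {v1, v2, v3} \<noteq> {}"
  then obtain z where z: "z \<in> {u1, u2, u3}" "z \<in> {v1, v2, v3}"
    by blast
  have "symp (\<lambda>x y. {x, y} \<in> ?R)"
    by (simp add: symp_def insert_commute)
  moreover have "{u1, u2, u3} \<in> components (\<Union>?R) (\<lambda>x y. {x, y} \<in> ?R)"
    "{v1, v2, v3} \<in> components (\<Union>?R) (\<lambda>x y. {x, y} \<in> ?R)"
    using assms(1,2) unfolding P3_component_def edge_sub_components_def by simp_all
  ultimately have "{u1, u2, u3} = {v1, v2, v3}"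
    using z by (rule components_eq_if_common_member)
  then show False
    using assms(3) by contradiction
qed

lemma max_disjoint_matchings_rest_edge_connected:
  assumes G: "simple_graph V E" and max: "max_disjoint_matchings E M1 M2"
    and edge: "{u, w} \<in> rest_edges E M1 M2" and w: "\<not> covered M1 w" and u: "\<not> covered M2 u"
  shows "(\<lambda>p q. {p, q} \<in> M1 \<union> M2)\<^sup>*\<^sup>* w u"
proof (rule ccontr)
  define D where "D = {y. (\<lambda>p q. {p, q} \<in> M1 \<union> M2)\<^sup>*\<^sup>* w y}"
  assume "\<not> (\<lambda>p q. {p, q} \<in> M1 \<union> M2)\<^sup>*\<^sup>* w u"
  then have "u \<notin> D" "w \<in> D"
    unfolding D_def by simp_all
  have closed: "e \<subseteq> D" if e: "e \<in> M2 \<union> M1" "e \<inter> D \<noteq> {}" for e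
  proof -
    obtain p where p: "p \<in> e" "p \<in> D"
      using e(2) by blast
    obtain q where q: "e = {p, q}"
      using simple_graph_edgeE[OF G _ p(1)] e(1) max_disjoint_matchings_subset[OF max] by blast
    then have pq: "{p, q} \<in> M1 \<union> M2"
      using e(1) by auto
    have "q \<in> D"
      using p(2) unfolding D_def mem_Collect_eq by (rule rtranclp_doubleton_closed[OF pq])
    then show ?thesis
      using p(2) q by simp
  qed
  \<comment> \<open>Swapping M1 and M2 on D frees w in the new second matching while keeping u free in it,
    so {u, w} could be added to it.\<close>
  define N1 N2 where "N1 = swap_on D M1 M2" and "N2 = swap_on D M2 M1"
  have max': "max_disjoint_matchings E N2 N1"
    using max_disjoint_matchings_swap_on[OF max_disjoint_matchings_commute[OF max] closed]
    unfolding N1_def N2_def .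
  have "N2 \<union> N1 = M1 \<union> M2"
    unfolding N1_def N2_def swap_on_def by blast
  then have "{u, w} \<in> rest_edges E N2 N1"
    using edge unfolding rest_edges_def by simp
  moreover have "\<not> covered N2 u" "\<not> covered N2 w"
    using covered_swap_on[OF closed, where v = u] covered_swap_on[OF closed, where v = w]
      \<open>u \<notin> D\<close> \<open>w \<in> D\<close> u w unfolding N2_def by simp_all
  ultimately show False
    using max_disjoint_matchings_edge_covered[OF simple_graph_finite_edges[OF G] max'] by blast
qed

lemma max_disjoint_matchings_no_rest_P3_of_leaves:
  assumes G: "simple_graph V E" and max: "max_disjoint_matchings E M1 M2"
    and P: "distinct [u1, u2, u3]" "{u1, u2} \<in> rest_edges E M1 M2" "{u2, u3} \<in> rest_edges E M1 M2"
    and leaf: "\<And>w e e'. w \<in> {u1, u2, u3} \<Longrightarrow> e \<in> M1 \<union> M2 \<Longrightarrow> e' \<in> M1 \<union> M2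
      \<Longrightarrow> w \<in> e \<Longrightarrow> w \<in> e' \<Longrightarrow> e = e'"
    and centre: "\<not> covered M1 u2"
  shows False
proof -
  note M = max_disjoint_matchingsD(1-3)[OF max]
  have "covered M1 u1" "covered M1 u3"
    using max_disjoint_matchings_edge_covered[OF simple_graph_finite_edges[OF G] max] P(2,3) centre
    by blast+
  then have "\<not> covered M2 u1" "\<not> covered M2 u3"
    using leaf[of u1] leaf[of u3] M(3) unfolding covered_def by blast+
  moreover have "{u3, u2} \<in> rest_edges E M1 M2"
    using P(3) by (simp add: insert_commute)
  ultimately have reach: "(\<lambda>p q. {p, q} \<in> M1 \<union> M2)\<^sup>*\<^sup>* u2 u1" "(\<lambda>p q. {p, q} \<in> M1 \<union> M2)\<^sup>*\<^sup>* u2 u3"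
    using max_disjoint_matchings_rest_edge_connected[OF G max _ centre] P(2) by blast+
  show False
  proof (rule no_three_leaves_if_max_degree_2[of "M1 \<union> M2" u2 u1 u3])
    show "e1 = e2 \<or> e1 = e3 \<or> e2 = e3"
      if "e1 \<in> M1 \<union> M2" "e2 \<in> M1 \<union> M2" "e3 \<in> M1 \<union> M2" "v \<in> e1" "v \<in> e2" "v \<in> e3"
      for v e1 e2 e3
      using matching_Un_degree_le_2[OF M(1,2) that] .
    show "e = e'"
      if "w \<in> {u2, u1, u3}" "e \<in> M1 \<union> M2" "e' \<in> M1 \<union> M2" "w \<in> e" "w \<in> e'" for w e e'
      using leaf that by blast
    show "distinct [u2, u1, u3]"
      using P(1) by auto
  qed (fact reach)+
qed

lemma symp_H_adj: "symp (H_adj E)"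
  by (intro sympI) (auto simp: H_adj_def edge_dist_le2_def Int_commute)

lemma H_adj_free_centre_P3E:
  assumes G: "simple_graph V E" and P: "free_centre_P3 E M1 M2 u1 u2 u3"
    and e: "e \<in> {{u1, u2}, {u2, u3}}" and f: "f \<in> rest_edges E M1 M2"
    and f_off: "f \<notin> {{u1, u2}, {u2, u3}}" and H: "H_adj E e f"
  obtains w a x where "w \<in> {u1, u3}" "{w, a} \<in> M1 \<union> M2" "f = {a, x}"
proof -
  have f_disj: "f \<inter> {u1, u2, u3} = {}"
    using free_centre_P3D(6)[OF P f] f_off by blast
  moreover have e_sub: "e \<subseteq> {u1, u2, u3}"
    using e by blast
  ultimately have "e \<inter> f = {}" "e \<noteq> f"
    using e f_off by blast+
  then obtain e3 where e3: "e3 \<in> E" "e \<inter> e3 \<noteq> {}" "e3 \<inter> f \<noteq> {}"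
    using H unfolding H_adj_def edge_dist_le2_def by blast
  obtain w b where wb: "w \<in> e" "w \<in> e3" "b \<in> e3" "b \<in> f"
    using e3(2,3) by blast
  have "w \<in> {u1, u2, u3}" "b \<notin> {u1, u2, u3}"
    using wb e_sub f_disj by blast+
  moreover obtain y where "e3 = {w, y}"
    using simple_graph_edgeE[OF G e3(1) wb(2)] by blast
  ultimately have e3_eq: "e3 = {w, b}"
    using wb(3) by auto
  have "e3 \<in> M1 \<union> M2"
  proof (rule ccontr)
    assume "e3 \<notin> M1 \<union> M2"
    then have "e3 \<in> rest_edges E M1 M2"
      using e3(1) unfolding rest_edges_def by simp
    then have "e3 \<subseteq> {u1, u2, u3}"
      using free_centre_P3D(6)[OF P] wb(2) \<open>w \<in> {u1, u2, u3}\<close> by blast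
    then show False
      using wb(3) \<open>b \<notin> {u1, u2, u3}\<close> by blast
  qed
  moreover have "w \<noteq> u2"
    using calculation wb(2) free_centre_P3D(4,5)[OF P] unfolding covered_def by blast
  moreover obtain x where "f = {b, x}"
    using simple_graph_edgeE[OF G _ wb(4)] f unfolding rest_edges_def by blast
  ultimately show ?thesis
    using that \<open>w \<in> {u1, u2, u3}\<close> e3_eq by blast
qed

section \<open>Exchanges along an H-walk\<close>

locale subcubic_graph_3_independent =
  fixes V :: "'a set" and E :: "'a set set"
  assumes simple: "simple_graph V E"
    and degree_le_3: "\<And>v. v \<in> V \<Longrightarrow> degree E v \<le> 3"
    and degree_3_independent: "\<And>u v. {u, v} \<in> E \<Longrightarrow> degree E u = 3 \<Longrightarrow> degree E v \<noteq> 3"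
begin

lemma finite_edges: "finite E"
  using simple by (rule simple_graph_finite_edges)

lemma degree_le_3_if_incident: "e \<in> E \<Longrightarrow> v \<in> e \<Longrightarrow> degree E v \<le> 3"
  using simple_graph_edgeE[OF simple] degree_le_3 by metis

lemma rest_edge_unique_if_covered_twice:
  assumes "M1 \<union> M2 \<subseteq> E" "M1 \<inter> M2 = {}" "covered M1 v" "covered M2 v"
    and "f \<in> rest_edges E M1 M2" "v \<in> f" "e \<in> rest_edges E M1 M2" "v \<in> e"
  shows "e = f"
proof -
  obtain e1 e2 where e: "e1 \<in> M1" "v \<in> e1" "e2 \<in> M2" "v \<in> e2"
    using assms(3,4) unfolding covered_def by blast
  have f: "f \<in> E" "f \<notin> M1 \<union> M2" and e_rest: "e \<in> E" "e \<notin> M1 \<union> M2"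
    using assms(5,7) unfolding rest_edges_def by simp_all
  have "e1 \<noteq> e2"
    using e(1,3) assms(2) by blast
  moreover have "f \<noteq> e1" "f \<noteq> e2"
    using e(1,3) f(2) by blast+
  ultimately have "card {e1, e2, f} = 3"
    by simp
  then have "degree E v \<le> card {e1, e2, f}"
    using degree_le_3_if_incident[OF f(1) assms(6)] by simp
  moreover have "{e1, e2, f} \<subseteq> E"
    using assms(1) e(1,3) f(1) by blast
  moreover have "\<And>e'. e' \<in> {e1, e2, f} \<Longrightarrow> v \<in> e'"
    using e(2,4) assms(6) by blast
  ultimately have "e \<in> {e1, e2, f}"
    using incident_edge_mem_if_degree_le[OF finite_edges _ _ _ e_rest(1) assms(8)] by blast
  then show ?thesis
    using e(1,3) e_rest(2) by blast
qed

lemma matched_edge_unique_on_rest_P3: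
  assumes sub: "M1 \<union> M2 \<subseteq> E" and distinct: "distinct [u1, u2, u3]"
    and path: "{u1, u2} \<in> rest_edges E M1 M2" "{u2, u3} \<in> rest_edges E M1 M2"
    and centre: "degree E u2 = 3"
    and w: "w \<in> {u1, u2, u3}" and e: "e \<in> M1 \<union> M2" "e' \<in> M1 \<union> M2" "w \<in> e" "w \<in> e'"
  shows "e = e'"
proof -
  have path_E: "{u1, u2} \<in> E" "{u2, u3} \<in> E" "{u1, u2} \<notin> M1 \<union> M2" "{u2, u3} \<notin> M1 \<union> M2"
    using path unfolding rest_edges_def by simp_all
  have "degree E u1 \<noteq> 3" "degree E u3 \<noteq> 3"
    using degree_3_independent[OF _ centre] path_E(1,2) by (simp_all add: insert_commute)
  then have deg: "degree E u1 \<le> Suc (card {{u1, u2}})" "degree E u3 \<le> Suc (card {{u2, u3}})"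
    using degree_le_3_if_incident[OF path_E(1), of u1] degree_le_3_if_incident[OF path_E(2), of u3]
    by simp_all
  consider "w = u1" | "w = u2" | "w = u3"
    using w by blast
  then obtain F where F: "F \<subseteq> {{u1, u2}, {u2, u3}}" "\<And>e. e \<in> F \<Longrightarrow> w \<in> e"
    "degree E w \<le> Suc (card F)"
  proof cases
    case 1
    then show ?thesis
      using that[of "{{u1, u2}}"] deg(1) by simp
  next
    case 2
    have "card {{u1, u2}, {u2, u3}} = 2"
      using distinct by (simp add: doubleton_eq_iff)
    then show ?thesis
      by (intro that[of "{{u1, u2}, {u2, u3}}"]) (use 2 centre in auto)
  next
    case 3
    then show ?thesis
      using that[of "{{u2, u3}}"] deg(2) by simp
  qed
  moreover have "F \<subseteq> E" "e \<in> E - F" "e' \<in> E - F"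
    using F(1) e(1,2) sub path_E by blast+
  ultimately show ?thesis
    using incident_edges_outside_eq_if_degree_le[OF finite_edges _ F(2,3) _ _ e(3,4)] by blast
qed

lemma rest_P3_centre_unmatched:
  assumes max: "max_disjoint_matchings E M1 M2" and distinct: "distinct [u1, u2, u3]"
    and path: "{u1, u2} \<in> rest_edges E M1 M2" "{u2, u3} \<in> rest_edges E M1 M2"
  shows "\<not> covered (M1 \<union> M2) u2"
proof (cases "degree E u2 = 3")
  case True
  note leaf = matched_edge_unique_on_rest_P3[OF max_disjoint_matchings_subset[OF max] distinct path True]
  have "\<not> covered M1 u2 \<or> \<not> covered M2 u2"
    using leaf[of u2] max_disjoint_matchingsD(3)[OF max] unfolding covered_def by blast
  then have False
  proof
    assume "\<not> covered M1 u2"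
    then show False
      by (rule max_disjoint_matchings_no_rest_P3_of_leaves[OF simple max distinct path, rotated])
        (fact leaf)
  next
    assume "\<not> covered M2 u2"
    moreover have "{u1, u2} \<in> rest_edges E M2 M1" "{u2, u3} \<in> rest_edges E M2 M1"
      using path rest_edges_commute[of E M1 M2] by simp_all
    moreover note leaf[unfolded Un_commute[of M1 M2]]
    ultimately show False
      using max_disjoint_matchings_no_rest_P3_of_leaves[OF simple
          max_disjoint_matchings_commute[OF max] distinct] by blast
  qed
  then show ?thesis ..
next
  case False
  have path_E: "{u1, u2} \<in> E" "{u2, u3} \<in> E" "{u1, u2} \<notin> M1 \<union> M2" "{u2, u3} \<notin> M1 \<union> M2"
    using path unfolding rest_edges_def by simp_all
  have "card {{u1, u2}, {u2, u3}} = 2"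
    using distinct by (simp add: doubleton_eq_iff)
  then have "degree E u2 \<le> card {{u1, u2}, {u2, u3}}"
    using False degree_le_3_if_incident[OF path_E(1), of u2] by simp
  moreover have "{{u1, u2}, {u2, u3}} \<subseteq> E"
    using path_E(1,2) by simp
  moreover have "\<And>e. e \<in> {{u1, u2}, {u2, u3}} \<Longrightarrow> u2 \<in> e"
    by auto
  ultimately have "e \<in> {{u1, u2}, {u2, u3}}" if "e \<in> E" "u2 \<in> e" for e
    using incident_edge_mem_if_degree_le[OF finite_edges _ _ _ that] by blast
  then show ?thesis
    using max_disjoint_matchings_subset[OF max] path_E(3,4) unfolding covered_def by blast
qed

lemma P3_component_free_centre:
  assumes max: "max_disjoint_matchings E M1 M2" and P: "P3_component E M1 M2 u1 u2 u3"
  shows "free_centre_P3 E M1 M2 u1 u2 u3"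
proof -
  let ?R = "rest_edges E M1 M2"
  have distinct: "distinct [u1, u2, u3]"
    using P unfolding P3_component_def by simp
  have "{u1, u2} \<in> {e \<in> ?R. e \<subseteq> {u1, u2, u3}}" "{u2, u3} \<in> {e \<in> ?R. e \<subseteq> {u1, u2, u3}}"
    using P unfolding P3_component_def by simp_all
  then have path: "{u1, u2} \<in> ?R" "{u2, u3} \<in> ?R"
    by simp_all
  show ?thesis
    unfolding free_centre_P3_def
    using distinct path rest_P3_centre_unmatched[OF max distinct path] P3_component_closed[OF simple P]
    by blast
qed

context
  fixes M1 M2 :: "'a set set" and u1 u2 u3 a x :: 'a
  assumes max: "max_disjoint_matchings E M1 M2"
    and P: "free_centre_P3 E M1 M2 u1 u2 u3"
    and end_edge: "{u1, a} \<in> M1"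
    and next_edge: "{a, x} \<in> rest_edges E M1 M2"
    and next_edge_off_P: "{a, x} \<notin> {{u1, u2}, {u2, u3}}"
begin

lemma exchange_vertices_off_P: "a \<notin> {u1, u2, u3}" "x \<notin> {u1, u2, u3}"
proof -
  have "{a, x} \<inter> {u1, u2, u3} = {}"
    using free_centre_P3D(6)[OF P next_edge] next_edge_off_P by blast
  then show "a \<notin> {u1, u2, u3}" "x \<notin> {u1, u2, u3}"
    by blast+
qed

lemma exchange_degree_end: "degree E u1 = 3"
proof -
  have path: "{u1, u2} \<in> E" "{u1, u2} \<notin> M1 \<union> M2"
    using free_centre_P3D(2)[OF P] unfolding rest_edges_def by simp_all
  obtain e2 where e2: "e2 \<in> M2" "u1 \<in> e2"
    using free_centre_P3_end_covered[OF finite_edges max_disjoint_matchings_commute[OF max]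
        free_centre_P3_commute[OF P]]
    unfolding covered_def by blast
  have "{u1, a} \<noteq> e2"
    using end_edge e2(1) max_disjoint_matchingsD(3)[OF max] by auto
  moreover have "{u1, a} \<noteq> {u1, u2}" "e2 \<noteq> {u1, u2}"
    using end_edge e2(1) path(2) by auto
  ultimately have "card {{u1, a}, e2, {u1, u2}} = 3"
    by simp
  moreover have "card {{u1, a}, e2, {u1, u2}} \<le> degree E u1"
    using end_edge e2 max_disjoint_matchings_subset[OF max] path(1)
    by (intro card_le_degree[OF finite_edges]) auto
  ultimately show ?thesis
    using degree_le_3_if_incident[OF path(1), of u1] by simp
qed

lemma exchange_edges_at_a:
  assumes "e \<in> E" "a \<in> e"
  shows "e = {u1, a} \<or> e = {a, x}"
proof -
  have sub: "M1 \<union> M2 \<subseteq> E"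
    using max by (rule max_disjoint_matchings_subset)
  have next_E: "{a, x} \<in> E"
    using next_edge unfolding rest_edges_def by simp
  have "degree E a \<noteq> 3"
    using degree_3_independent[OF _ exchange_degree_end] end_edge sub by blast
  moreover have "u1 \<notin> {a, x}"
    using exchange_vertices_off_P by auto
  then have "card {{u1, a}, {a, x}} = 2"
    by (auto simp: doubleton_eq_iff)
  ultimately have "degree E a \<le> card {{u1, a}, {a, x}}"
    using degree_le_3_if_incident[OF next_E, of a] by simp
  moreover have "{{u1, a}, {a, x}} \<subseteq> E"
    using end_edge sub next_E by blast
  moreover have "\<And>e. e \<in> {{u1, a}, {a, x}} \<Longrightarrow> a \<in> e"
    by auto
  ultimately have "e \<in> {{u1, a}, {a, x}}"
    using incident_edge_mem_if_degree_le[OF finite_edges _ _ _ assms] by blast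
  then show ?thesis
    by simp
qed

lemma exchange_max: "max_disjoint_matchings E (insert {u1, u2} (M1 - {{u1, a}})) M2"
  using max_disjoint_matchings_exchange[OF finite_edges max end_edge free_centre_P3D(2,4)[OF P]] .

lemma exchange_rest_edges:
  "rest_edges E (insert {u1, u2} (M1 - {{u1, a}})) M2
    = insert {u1, a} (rest_edges E M1 M2 - {{u1, u2}})"
  using rest_edges_exchange[OF max end_edge free_centre_P3D(2)[OF P]] .

lemma exchange_a_unmatched: "\<not> covered M2 a" "\<not> covered (insert {u1, u2} (M1 - {{u1, a}})) a"
proof -
  have "e \<notin> M2" "e \<notin> M1 - {{u1, a}}" if "e \<in> M1 \<union> M2" "a \<in> e" for e
  proof -
    have "e \<in> E"
      using that(1) max_disjoint_matchings_subset[OF max] by blast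
    then have "e = {u1, a} \<or> e = {a, x}"
      using exchange_edges_at_a that(2) by blast
    then show "e \<notin> M2" "e \<notin> M1 - {{u1, a}}"
      using end_edge next_edge max_disjoint_matchingsD(3)[OF max] unfolding rest_edges_def
      by blast+
  qed
  moreover have "a \<notin> {u1, u2}"
    using exchange_vertices_off_P(1) by simp
  ultimately show "\<not> covered M2 a" "\<not> covered (insert {u1, u2} (M1 - {{u1, a}})) a"
    unfolding covered_def by blast+
qed

lemma exchange_rest_edge_at_x:
  assumes "e \<in> rest_edges E (insert {u1, u2} (M1 - {{u1, a}})) M2" "x \<in> e"
  shows "e = {a, x}"
proof -
  define N1 where "N1 = insert {u1, u2} (M1 - {{u1, a}})"
  have max': "max_disjoint_matchings E N1 M2"
    unfolding N1_def by (rule exchange_max)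
  have next': "{a, x} \<in> rest_edges E N1 M2"
    using exchange_rest_edges next_edge next_edge_off_P unfolding N1_def by simp
  then have "{a, x} \<in> rest_edges E M2 N1"
    using rest_edges_commute[of E N1 M2] by simp
  then have "covered M2 x"
    using max_disjoint_matchings_edge_covered[OF finite_edges max_disjoint_matchings_commute[OF max']]
      exchange_a_unmatched(1) by blast
  moreover have "covered N1 x"
    using max_disjoint_matchings_edge_covered[OF finite_edges max' next'] exchange_a_unmatched(2)
    unfolding N1_def by blast
  ultimately show ?thesis
    using rest_edge_unique_if_covered_twice[OF max_disjoint_matchings_subset[OF max']
        max_disjoint_matchingsD(3)[OF max'] _ _ next' _ assms[folded N1_def]] by simp
qed

lemma exchange_free_centre_P3: "free_centre_P3 E (insert {u1, u2} (M1 - {{u1, a}})) M2 u1 a x"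
proof -
  let ?R' = "rest_edges E (insert {u1, u2} (M1 - {{u1, a}})) M2"
  have off: "a \<notin> {u1, u2, u3}" "x \<notin> {u1, u2, u3}"
    by (rule exchange_vertices_off_P)+
  have "a \<noteq> x"
    using next_edge simple_graph_doubleton_edgeD(1)[OF simple] unfolding rest_edges_def by blast
  then have distinct: "distinct [u1, a, x]"
    using off by auto
  have path: "{u1, a} \<in> ?R'" "{a, x} \<in> ?R'"
    using exchange_rest_edges next_edge next_edge_off_P by auto
  have closed: "e = {u1, a} \<or> e = {a, x}" if e: "e \<in> ?R'" "e \<inter> {u1, a, x} \<noteq> {}" for e
  proof (cases "e = {u1, a}")
    case False
    then have old: "e \<in> rest_edges E M1 M2" "e \<noteq> {u1, u2}"
      using e(1) exchange_rest_edges by auto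
    consider "u1 \<in> e" | "a \<in> e" | "x \<in> e"
      using e(2) by blast
    then show ?thesis
    proof cases
      case 1
      then have "e = {u1, u2} \<or> e = {u2, u3}"
        using free_centre_P3D(6)[OF P old(1)] by blast
      then show ?thesis
        using 1 old(2) free_centre_P3D(1)[OF P] by auto
    next
      case 2
      then show ?thesis
        using exchange_edges_at_a old(1) unfolding rest_edges_def by blast
    next
      case 3
      then show ?thesis
        using exchange_rest_edge_at_x e(1) by blast
    qed
  qed simp
  have "\<not> covered (insert {u1, u2} (M1 - {{u1, a}}) \<union> M2) a"
    using exchange_a_unmatched by (simp only: covered_Un) simp
  then show ?thesis
    unfolding free_centre_P3_def using distinct path closed by blast
qed

lemma exchange_keeps_free_centre_P3:
  assumes Q: "free_centre_P3 E M1 M2 v1 v2 v3" and disj: "{u1, u2, u3} \<inter> {v1, v2, v3} = {}"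
  shows "free_centre_P3 E (insert {u1, u2} (M1 - {{u1, a}})) M2 v1 v2 v3"
    and "{u1, a, x} \<inter> {v1, v2, v3} = {}"
proof -
  have "covered M2 v1" "covered M2 v3"
    using free_centre_P3_end_covered[OF finite_edges max_disjoint_matchings_commute[OF max]
        free_centre_P3_commute[OF Q]]
      free_centre_P3_end_covered[OF finite_edges max_disjoint_matchings_commute[OF max]
        free_centre_P3_commute[OF free_centre_P3_rev[OF Q]]] by simp_all
  moreover have "covered M1 a"
    using end_edge unfolding covered_def by blast
  ultimately have a_off_Q: "a \<notin> {v1, v2, v3}"
    using exchange_a_unmatched(1) free_centre_P3D(4)[OF Q] by auto
  then have "{a, x} \<inter> {v1, v2, v3} = {}"
    using free_centre_P3D(6)[OF Q next_edge] by auto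
  then show "{u1, a, x} \<inter> {v1, v2, v3} = {}"
    using disj a_off_Q by blast
  have "e \<in> insert {u1, u2} (M1 - {{u1, a}}) \<union> M2 \<longleftrightarrow> e \<in> M1 \<union> M2"
    if "e \<inter> {v1, v2, v3} \<noteq> {}" for e
  proof -
    have "e \<noteq> {u1, u2}" "e \<noteq> {u1, a}"
      using that disj a_off_Q by auto
    then show ?thesis
      by simp
  qed
  then show "free_centre_P3 E (insert {u1, u2} (M1 - {{u1, a}})) M2 v1 v2 v3"
    by (rule free_centre_P3_cong[OF Q])
qed

lemma free_centre_P3_exchange:
  assumes "free_centre_P3 E M1 M2 v1 v2 v3" "{u1, u2, u3} \<inter> {v1, v2, v3} = {}"
  obtains N1 N2 where "max_disjoint_matchings E N1 N2" "free_centre_P3 E N1 N2 u1 a x"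
    "free_centre_P3 E N1 N2 v1 v2 v3" "{u1, a, x} \<inter> {v1, v2, v3} = {}"
    "rest_edges E M1 M2 - {{u1, u2}} \<subseteq> rest_edges E N1 N2"
proof -
  have "rest_edges E M1 M2 - {{u1, u2}} \<subseteq> rest_edges E (insert {u1, u2} (M1 - {{u1, a}})) M2"
    unfolding exchange_rest_edges by blast
  with exchange_max exchange_free_centre_P3 exchange_keeps_free_centre_P3[OF assms] show thesis
    by (rule that)
qed

end

lemma free_centre_P3_step:
  assumes max: "max_disjoint_matchings E M1 M2"
    and P: "free_centre_P3 E M1 M2 u1 u2 u3" and Q: "free_centre_P3 E M1 M2 v1 v2 v3"
    and disj: "{u1, u2, u3} \<inter> {v1, v2, v3} = {}"
    and e: "e \<in> {{u1, u2}, {u2, u3}}"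
    and f: "f \<in> rest_edges E M1 M2" "f \<notin> {{u1, u2}, {u2, u3}}" "H_adj E e f"
  obtains N1 N2 p1 p2 p3 z where "z \<in> {{u1, u2}, {u2, u3}}" "max_disjoint_matchings E N1 N2"
    "free_centre_P3 E N1 N2 p1 p2 p3" "f \<in> {{p1, p2}, {p2, p3}}" "free_centre_P3 E N1 N2 v1 v2 v3"
    "{p1, p2, p3} \<inter> {v1, v2, v3} = {}" "rest_edges E M1 M2 - {z} \<subseteq> rest_edges E N1 N2"
proof -
  obtain w a x where wax: "w \<in> {u1, u3}" "{w, a} \<in> M1 \<union> M2" "f = {a, x}"
    by (rule H_adj_free_centre_P3E[OF simple P e f])
  obtain w' where P': "free_centre_P3 E M1 M2 w u2 w'" "{w, u2, w'} = {u1, u2, u3}"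
    "{{w, u2}, {u2, w'}} = {{u1, u2}, {u2, u3}}"
    using wax(1) P free_centre_P3_rev[OF P] by (auto simp: insert_commute)
  then have disj': "{w, u2, w'} \<inter> {v1, v2, v3} = {}"
    and next_edge: "{a, x} \<in> rest_edges E M1 M2" "{a, x} \<notin> {{w, u2}, {u2, w'}}"
    using disj f(1,2) wax(3) by simp_all
  obtain N1 N2 where N: "max_disjoint_matchings E N1 N2" "free_centre_P3 E N1 N2 w a x"
    "free_centre_P3 E N1 N2 v1 v2 v3" "{w, a, x} \<inter> {v1, v2, v3} = {}"
    "rest_edges E M1 M2 - {{w, u2}} \<subseteq> rest_edges E N1 N2"
  proof (cases "{w, a} \<in> M1")
    case True
    show ?thesis
      by (rule free_centre_P3_exchange[OF max P'(1) True next_edge Q disj']) (rule that)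
  next
    case False
    then have "{w, a} \<in> M2"
      using wax(2) by simp
    moreover have "{a, x} \<in> rest_edges E M2 M1"
      using next_edge(1) rest_edges_commute[of E M1 M2] by simp
    ultimately obtain N1 N2 where N: "max_disjoint_matchings E N1 N2"
      "free_centre_P3 E N1 N2 w a x" "free_centre_P3 E N1 N2 v1 v2 v3"
      "{w, a, x} \<inter> {v1, v2, v3} = {}" "rest_edges E M2 M1 - {{w, u2}} \<subseteq> rest_edges E N1 N2"
      using free_centre_P3_exchange[OF max_disjoint_matchings_commute[OF max]
          free_centre_P3_commute[OF P'(1)] _ _ next_edge(2) free_centre_P3_commute[OF Q] disj']
      by blast
    show ?thesis
      by (rule that[of N1 N2]) (use N rest_edges_commute[of E M2 M1] in simp_all)
  qed
  have "{w, u2} \<in> {{u1, u2}, {u2, u3}}"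
    unfolding P'(3)[symmetric] by simp
  then show ?thesis
    by (rule that[of "{w, u2}" N1 N2 w a x]) (use N wax(3) in simp_all)
qed

lemma H_walk_shortens:
  assumes max: "max_disjoint_matchings E M1 M2"
    and P: "free_centre_P3 E M1 M2 u1 u2 u3" and Q: "free_centre_P3 E M1 M2 v1 v2 v3"
    and disj: "{u1, u2, u3} \<inter> {v1, v2, v3} = {}" and e: "e \<in> {{u1, u2}, {u2, u3}}"
    and walk: "(restr_adj (rest_edges E M1 M2) (H_adj E) ^^ Suc m) e g"
  obtains (same) k e' where "k \<le> m" "e' \<in> {{u1, u2}, {u2, u3}}"
      "(restr_adj (rest_edges E M1 M2) (H_adj E) ^^ k) e' g"
    | (exchanged) N1 N2 p1 p2 p3 f where "max_disjoint_matchings E N1 N2"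
      "free_centre_P3 E N1 N2 p1 p2 p3" "free_centre_P3 E N1 N2 v1 v2 v3"
      "{p1, p2, p3} \<inter> {v1, v2, v3} = {}" "f \<in> {{p1, p2}, {p2, p3}}"
      "(restr_adj (rest_edges E N1 N2) (H_adj E) ^^ m) f g"
proof -
  let ?H = "restr_adj (rest_edges E M1 M2) (H_adj E)"
  obtain f where ef: "?H e f" and fg: "(?H ^^ m) f g"
    using relpowp_Suc_D2[OF walk] by blast
  have f: "f \<in> rest_edges E M1 M2" "H_adj E e f"
    using ef unfolding restr_adj_def by blast+
  show thesis
  proof (cases "f \<in> {{u1, u2}, {u2, u3}}")
    case True
    then show thesis
      using same[of m f] fg by simp
  next
    case False
    obtain N1 N2 p1 p2 p3 z where N: "z \<in> {{u1, u2}, {u2, u3}}" "max_disjoint_matchings E N1 N2"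
      "free_centre_P3 E N1 N2 p1 p2 p3" "f \<in> {{p1, p2}, {p2, p3}}"
      "free_centre_P3 E N1 N2 v1 v2 v3" "{p1, p2, p3} \<inter> {v1, v2, v3} = {}"
      "rest_edges E M1 M2 - {z} \<subseteq> rest_edges E N1 N2"
      by (rule free_centre_P3_step[OF max P Q disj e f(1) False f(2)])
    have "f \<noteq> z"
      using N(1) False by blast
    from relpowp_restr_adj_avoid[OF fg this] show thesis
    proof
      assume "(restr_adj (rest_edges E M1 M2 - {z}) (H_adj E) ^^ m) f g"
      then have "(restr_adj (rest_edges E N1 N2) (H_adj E) ^^ m) f g"
        by (rule relpowp_restr_adj_mono[OF N(7)])
      then show thesis
        using exchanged[OF N(2,3,5,6,4)] by blast
    next
      assume "\<exists>k<m. (?H ^^ k) z g"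
      then show thesis
        using same N(1) by (meson less_imp_le)
    qed
  qed
qed

lemma no_H_walk_between_free_centre_P3s:
  assumes "max_disjoint_matchings E M1 M2"
    and "free_centre_P3 E M1 M2 u1 u2 u3" "free_centre_P3 E M1 M2 v1 v2 v3"
    and "{u1, u2, u3} \<inter> {v1, v2, v3} = {}"
    and "e \<in> {{u1, u2}, {u2, u3}}" "g \<in> {{v1, v2}, {v2, v3}}"
  shows "\<not> (restr_adj (rest_edges E M1 M2) (H_adj E) ^^ n) e g"
  using assms
proof (induction n arbitrary: M1 M2 u1 u2 u3 e rule: less_induct)
  case (less n)
  note max = less.prems(1) and P = less.prems(2) and Q = less.prems(3)
    and disj = less.prems(4) and e = less.prems(5) and g = less.prems(6)
  show ?case
  proof
    assume walk: "(restr_adj (rest_edges E M1 M2) (H_adj E) ^^ n) e g"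
    show False
    proof (cases n)
      case 0
      then show False
        using walk e g disj by auto
    next
      case (Suc m)
      show False
      proof (rule H_walk_shortens[OF max P Q disj e walk[unfolded Suc]])
        fix k e'
        assume "k \<le> m" "e' \<in> {{u1, u2}, {u2, u3}}"
          "(restr_adj (rest_edges E M1 M2) (H_adj E) ^^ k) e' g"
        then show False
          using less.IH[of k, OF _ max P Q disj _ g] Suc by simp
      next
        fix N1 N2 p1 p2 p3 f
        assume "max_disjoint_matchings E N1 N2" "free_centre_P3 E N1 N2 p1 p2 p3"
          "free_centre_P3 E N1 N2 v1 v2 v3" "{p1, p2, p3} \<inter> {v1, v2, v3} = {}"
          "f \<in> {{p1, p2}, {p2, p3}}" "(restr_adj (rest_edges E N1 N2) (H_adj E) ^^ m) f g"
        then show False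
          using less.IH[of m, OF _ _ _ _ _ _ g] Suc by simp
      qed
    qed
  qed
qed

end

theorem lemma3:
  fixes V :: "'a set" and E :: "'a set set"
  assumes "simple_graph V E"
    and "connected_graph V E"
    and "\<forall>v\<in>V. degree E v \<le> 3"
    and "\<forall>v\<in>V. degree E v \<ge> 2"
    and "\<forall>u\<in>V. \<forall>v\<in>V. {u, v} \<in> E \<longrightarrow> \<not> (degree E u = 3 \<and> degree E v = 3)"
    and "optimal_pair E M1 M2"
    and "P3_component E M1 M2 u1 u2 u3"
    and "P3_component E M1 M2 v1 v2 v3"
    and "{u1, u2, u3} \<noteq> {v1, v2, v3}"
  shows "\<not> (\<exists>C \<in> H_components E M1 M2.
             {u1, u2} \<in> C \<and> {u2, u3} \<in> C \<and> {v1, v2} \<in> C \<and> {v2, v3} \<in> C)"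
proof
  assume "\<exists>C \<in> H_components E M1 M2. {u1, u2} \<in> C \<and> {u2, u3} \<in> C \<and> {v1, v2} \<in> C \<and> {v2, v3} \<in> C"
  then obtain C where C: "C \<in> H_components E M1 M2" "{u1, u2} \<in> C" "{v1, v2} \<in> C"
    by blast
  interpret subcubic_graph_3_independent V E
  proof
    show "degree E v \<noteq> 3" if "{u, v} \<in> E" "degree E u = 3" for u v
      using assms(5) that simple_graph_doubleton_edgeD(2,3)[OF assms(1) that(1)] by blast
  qed (use assms(1,3) in auto)
  have max: "max_disjoint_matchings E M1 M2"
    using assms(6) unfolding optimal_pair_def max_disjoint_matchings_def by simp
  have "(restr_adj (rest_edges E M1 M2) (H_adj E))\<^sup>*\<^sup>* {u1, u2} {v1, v2}"
    using C(2,3) by (rule components_member_connected[OF symp_H_adj C(1)[unfolded H_components_def]])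
  then obtain n where "(restr_adj (rest_edges E M1 M2) (H_adj E) ^^ n) {u1, u2} {v1, v2}"
    using rtranclp_imp_relpowp by metis
  then show False
    using no_H_walk_between_free_centre_P3s[OF max P3_component_free_centre[OF max assms(7)]
        P3_component_free_centre[OF max assms(8)] P3_components_disjoint[OF assms(7-9)]]
    by simp
qed

end
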